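(* Let $X \subseteq \mathrm{VF}^n\times\mathrm{VF}^m$ and $\bar a\in\mathrm{VF}^n$. Let $L_1, L_2 \subseteq \mathrm{VF}^m$ be two minimal limit sets of $X$ at $\bar a$, and let $\overline{L}_1, \overline{L}_2$ be their topological closures. Then $\overline{L}_1 = \overline{L}_2$.
   Context: $\mathrm{VF}$ is an algebraically closed valued field with value group $\Gamma$, valuation $v$, and the valuation topology. For $\bar b\in\mathrm{VF}^k$, $\epsilon\in\Gamma$, $\mathfrak{o}(\bar b,\epsilon)=\{\bar c: v(c_i-b_i)>\epsilon\text{ for all }i\}$. For $X\subseteq \mathrm{VF}^n\times\mathrm{VF}^m$, write $\mathrm{pr}_{\le n}X$ for its projection to $\mathrm{VF}^n$ and $\mathrm{fib}(X,\bar c)=\{\bar d:(\bar c,\bar d)\in X\}$. A set $L\subseteq\mathrm{VF}^m$ is a limit set of $X$ at $\bar a\in\mathrm{VF}^n$ if for every $\epsilon\in\Gamma$ there is $\delta\in\Gamma$ such that whenever $\bar c\in\mathfrak{o}(\bar a,\delta)\cap(\mathrm{pr}_{\le n}X\setminus\{\bar a\})$, we have $\mathrm{fib}(X,\bar c)\subseteq\bigcup_{\bar b\in L'}\mathfrak{o}(\bar b,\epsilon)$ for some $L'\subseteq L$. A limit set $L$ of $X$ at $\bar a$ is minimal if no proper subset of $L$ is a limit set of $X$ at $\bar a$. *)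

theory Defs
  imports "HOL-Computational_Algebra.Polynomial"
begin

text \<open>A valuation v on a field K with value group Gamma (a linearly ordered abelian
  group): v is defined on nonzero elements (its value at 0 is irrelevant and never
  used; v(0) is treated as +infinity), multiplicative-to-additive, ultrametric,
  and surjective from the nonzero elements onto Gamma.\<close>
definition valuation :: "('k::field \<Rightarrow> 'g::linordered_ab_group_add) \<Rightarrow> bool" where
  "valuation v \<longleftrightarrow>
     (\<forall>x y. x \<noteq> 0 \<longrightarrow> y \<noteq> 0 \<longrightarrow> v (x * y) = v x + v y) \<and>
     (\<forall>x y. x \<noteq> 0 \<longrightarrow> y \<noteq> 0 \<longrightarrow> x + y \<noteq> 0 \<longrightarrow> min (v x) (v y) \<le> v (x + y)) \<and>
     (\<forall>g. \<exists>x. x \<noteq> 0 \<and> v x = g)"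

definition alg_closed_field :: "'k::field itself \<Rightarrow> bool" where
  "alg_closed_field _ \<longleftrightarrow> (\<forall>p :: 'k poly. 0 < degree p \<longrightarrow> (\<exists>x. poly p x = 0))"

text \<open>v(x) > eps, with the convention v(0) = +infinity.\<close>
definition val_gt :: "('k::field \<Rightarrow> 'g::linordered_ab_group_add) \<Rightarrow> 'k \<Rightarrow> 'g \<Rightarrow> bool" where
  "val_gt v x eps \<longleftrightarrow> x = 0 \<or> eps < v x"

definition vball :: "('k::field \<Rightarrow> 'g::linordered_ab_group_add) \<Rightarrow> 'k list \<Rightarrow> 'g \<Rightarrow> 'k list set" where
  "vball v b eps = {c. length c = length b \<and> (\<forall>i<length b. val_gt v (c ! i - b ! i) eps)}"

definition tuples :: "nat \<Rightarrow> 'k list set" where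
  "tuples k = {c. length c = k}"

definition pr_le :: "('k list \<times> 'k list) set \<Rightarrow> 'k list set" where
  "pr_le X = fst ` X"

definition fib :: "('k list \<times> 'k list) set \<Rightarrow> 'k list \<Rightarrow> 'k list set" where
  "fib X c = {d. (c, d) \<in> X}"

definition is_limit_set ::
  "('k::field \<Rightarrow> 'g::linordered_ab_group_add) \<Rightarrow> nat \<Rightarrow> ('k list \<times> 'k list) set
     \<Rightarrow> 'k list \<Rightarrow> 'k list set \<Rightarrow> bool" where
  "is_limit_set v m X a L \<longleftrightarrow> L \<subseteq> tuples m \<and>
     (\<forall>eps. \<exists>delta. \<forall>c \<in> vball v a delta \<inter> (pr_le X - {a}).
        \<exists>L' \<subseteq> L. fib X c \<subseteq> (\<Union>b\<in>L'. vball v b eps))"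

definition is_min_limit_set ::
  "('k::field \<Rightarrow> 'g::linordered_ab_group_add) \<Rightarrow> nat \<Rightarrow> ('k list \<times> 'k list) set
     \<Rightarrow> 'k list \<Rightarrow> 'k list set \<Rightarrow> bool" where
  "is_min_limit_set v m X a L \<longleftrightarrow> is_limit_set v m X a L \<and>
     (\<forall>L'. L' \<subset> L \<longrightarrow> \<not> is_limit_set v m X a L')"

text \<open>Topological closure in VF^m for the valuation (product) topology, whose
  neighbourhood basis at x consists of the balls o(x, eps).\<close>
definition vclosure :: "('k::field \<Rightarrow> 'g::linordered_ab_group_add) \<Rightarrow> nat \<Rightarrow> 'k list set \<Rightarrow> 'k list set" where
  "vclosure v m L = {x \<in> tuples m. \<forall>eps. vball v x eps \<inter> L \<noteq> {}}"

end

theory Submission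
  imports Defs
begin

text \<open>Suppose a point b of a minimal limit set L1 is not in the closure of another limit
  set L2, so some ball o(b, e0) misses L2. Given eps, let e = max eps e0: over points close
  to a, every fibre point y is within e of a point of L2, and if y were also within e of b,
  the ultrametric inequality would put that point of L2 inside o(b, e0).
  Hence L1 \<subseteq> cl L2, and symmetrically L2 \<subseteq> cl L1.\<close>

lemma valuation_mult:
  assumes "valuation v" "x \<noteq> 0" "y \<noteq> 0"
  shows "v (x * y) = v x + v y"
  using assms unfolding valuation_def by blast

lemma valuation_ultrametric:
  assumes "valuation v" "x \<noteq> 0" "y \<noteq> 0" "x + y \<noteq> 0"
  shows "min (v x) (v y) \<le> v (x + y)"
  using assms unfolding valuation_def by blast

lemma valuation_one: "valuation v \<Longrightarrow> v 1 = 0"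
  using valuation_mult[of v 1 1] by simp

lemma valuation_minus_one: "valuation v \<Longrightarrow> v (-1) = 0"
  using valuation_mult[of v "-1" "-1"] valuation_one[of v] by simp

lemma valuation_uminus:
  assumes "valuation v" "x \<noteq> 0"
  shows "v (- x) = v x"
  using valuation_mult[OF assms(1), of "-1" x] valuation_minus_one[OF assms(1)] assms(2)
  by simp

lemma val_gt_uminus: "valuation v \<Longrightarrow> val_gt v x e \<Longrightarrow> val_gt v (- x) e"
  unfolding val_gt_def by (cases "x = 0") (auto simp: valuation_uminus)

lemma val_gt_add:
  assumes "valuation v" "val_gt v x e" "val_gt v y e"
  shows "val_gt v (x + y) e"
proof (cases "x = 0 \<or> y = 0 \<or> x + y = 0")
  case True
  then show ?thesis using assms unfolding val_gt_def by auto
next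
  case False
  then have "e < min (v x) (v y)" using assms unfolding val_gt_def by auto
  also have "\<dots> \<le> v (x + y)" using False valuation_ultrametric[OF assms(1)] by blast
  finally show ?thesis unfolding val_gt_def by simp
qed

lemma val_gt_mono: "e' \<le> e \<Longrightarrow> val_gt v x e \<Longrightarrow> val_gt v x e'"
  unfolding val_gt_def by auto

lemma vball_mono: "e' \<le> e \<Longrightarrow> c \<in> vball v b e \<Longrightarrow> c \<in> vball v b e'"
  unfolding vball_def using val_gt_mono by blast

lemma vball_commute:
  assumes "valuation v" "c \<in> vball v b e"
  shows "b \<in> vball v c e"
  using assms val_gt_uminus[OF assms(1), of "c ! i - b ! i" e for i]
  unfolding vball_def by auto

lemma vball_trans:
  assumes "valuation v" "c \<in> vball v b e" "d \<in> vball v c e"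
  shows "d \<in> vball v b e"
proof -
  have "val_gt v (d ! i - b ! i) e" if "i < length b" for i
    using val_gt_add[OF assms(1), of "d ! i - c ! i" e "c ! i - b ! i"] assms that
    unfolding vball_def by auto
  then show ?thesis using assms unfolding vball_def by auto
qed

lemma vball_common_point:
  assumes "valuation v" "y \<in> vball v b e" "y \<in> vball v b' e"
  shows "b' \<in> vball v b e"
  using vball_trans[OF assms(1,2) vball_commute[OF assms(1,3)]] .

lemma vclosure_subset_vclosure:
  assumes "valuation v" "L1 \<subseteq> vclosure v m L2"
  shows "vclosure v m L1 \<subseteq> vclosure v m L2"
proof
  fix x assume x: "x \<in> vclosure v m L1"
  have "vball v x eps \<inter> L2 \<noteq> {}" for eps
  proof -
    obtain b where b: "b \<in> vball v x eps" "b \<in> L1" using x unfolding vclosure_def by auto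
    obtain y where "y \<in> vball v b eps" "y \<in> L2" using assms(2) b(2) unfolding vclosure_def by auto
    then show ?thesis using vball_trans[OF assms(1) b(1)] by auto
  qed
  then show "x \<in> vclosure v m L2" using x unfolding vclosure_def by auto
qed

lemma cover_by_vballs_remove_centre:
  assumes "valuation v" "eps \<le> e"
    and "F \<subseteq> (\<Union>b'\<in>A. vball v b' e)" "F \<subseteq> (\<Union>b'\<in>B. vball v b' e)"
    and "vball v b e \<inter> B = {}"
  shows "F \<subseteq> (\<Union>b'\<in>A - {b}. vball v b' eps)"
proof
  fix y assume y: "y \<in> F"
  then obtain b1 where b1: "b1 \<in> A" "y \<in> vball v b1 e" using assms(3) by blast
  obtain b2 where b2: "b2 \<in> B" "y \<in> vball v b2 e" using assms(4) y by blast
  have "b1 \<noteq> b" using vball_common_point[OF assms(1) b1(2) b2(2)] b2(1) assms(5) by auto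
  then show "y \<in> (\<Union>b'\<in>A - {b}. vball v b' eps)" using b1 vball_mono[OF assms(2)] by blast
qed

lemma is_limit_set_eventually:
  assumes "is_limit_set v m X a L"
  shows "\<exists>delta. \<forall>delta' \<ge> delta. \<forall>c \<in> vball v a delta' \<inter> (pr_le X - {a}).
           \<exists>L' \<subseteq> L. fib X c \<subseteq> (\<Union>b\<in>L'. vball v b eps)"
proof -
  obtain delta where delta: "\<forall>c \<in> vball v a delta \<inter> (pr_le X - {a}).
      \<exists>L' \<subseteq> L. fib X c \<subseteq> (\<Union>b\<in>L'. vball v b eps)"
    using assms unfolding is_limit_set_def by blast
  have "vball v a delta' \<subseteq> vball v a delta" if "delta \<le> delta'" for delta'
    using vball_mono[OF that] by blast
  then show ?thesis using delta by blast
qed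

lemma is_limit_set_remove_far_point:
  assumes val: "valuation v" and L1: "is_limit_set v m X a L1" and L2: "is_limit_set v m X a L2"
    and far: "vball v b e0 \<inter> L2 = {}"
  shows "is_limit_set v m X a (L1 - {b})"
  unfolding is_limit_set_def
proof (intro conjI allI)
  show "L1 - {b} \<subseteq> tuples m" using L1 unfolding is_limit_set_def by auto
next
  fix eps
  define e where "e = max eps e0"
  obtain d1 where d1: "\<forall>delta' \<ge> d1. \<forall>c \<in> vball v a delta' \<inter> (pr_le X - {a}).
      \<exists>A \<subseteq> L1. fib X c \<subseteq> (\<Union>b\<in>A. vball v b e)"
    using is_limit_set_eventually[OF L1, where eps = e] ..
  obtain d2 where d2: "\<forall>delta' \<ge> d2. \<forall>c \<in> vball v a delta' \<inter> (pr_le X - {a}).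
      \<exists>B \<subseteq> L2. fib X c \<subseteq> (\<Union>b\<in>B. vball v b e)"
    using is_limit_set_eventually[OF L2, where eps = e] ..
  have eps_le: "eps \<le> e" unfolding e_def by simp
  have "vball v b e \<subseteq> vball v b e0"
    unfolding e_def using vball_mono[OF max.cobounded2] by blast
  then have far_e: "vball v b e \<inter> L2 = {}" using far by blast
  show "\<exists>delta. \<forall>c \<in> vball v a delta \<inter> (pr_le X - {a}).
          \<exists>L' \<subseteq> L1 - {b}. fib X c \<subseteq> (\<Union>b\<in>L'. vball v b eps)"
  proof (intro exI[of _ "max d1 d2"] ballI)
    fix c assume c: "c \<in> vball v a (max d1 d2) \<inter> (pr_le X - {a})"
    obtain A where A: "A \<subseteq> L1" "fib X c \<subseteq> (\<Union>b\<in>A. vball v b e)"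
      using d1[rule_format, OF max.cobounded1 c] by blast
    obtain B where B: "B \<subseteq> L2" "fib X c \<subseteq> (\<Union>b\<in>B. vball v b e)"
      using d2[rule_format, OF max.cobounded2 c] by blast
    have "vball v b e \<inter> B = {}" using far_e B(1) by blast
    then have "fib X c \<subseteq> (\<Union>b'\<in>A - {b}. vball v b' eps)"
      by (rule cover_by_vballs_remove_centre[OF val eps_le A(2) B(2)])
    moreover have "A - {b} \<subseteq> L1 - {b}" using A(1) by blast
    ultimately show "\<exists>L' \<subseteq> L1 - {b}. fib X c \<subseteq> (\<Union>b\<in>L'. vball v b eps)" by blast
  qed
qed

lemma min_limit_set_subset_vclosure:
  assumes val: "valuation v" and L1: "is_min_limit_set v m X a L1"
    and L2: "is_limit_set v m X a L2"
  shows "L1 \<subseteq> vclosure v m L2"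
proof
  fix b assume b: "b \<in> L1"
  have L1_limit: "is_limit_set v m X a L1" and L1_min: "\<not> is_limit_set v m X a (L1 - {b})"
    using L1 b unfolding is_min_limit_set_def by auto
  show "b \<in> vclosure v m L2"
  proof (rule ccontr)
    assume "b \<notin> vclosure v m L2"
    moreover have "b \<in> tuples m" using b L1_limit unfolding is_limit_set_def by auto
    ultimately obtain e0 where "vball v b e0 \<inter> L2 = {}" unfolding vclosure_def by auto
    then show False
      using is_limit_set_remove_far_point[OF val L1_limit L2] L1_min by blast
  qed
qed

theorem lemma3p2:
  fixes v :: "'k::field \<Rightarrow> 'g::linordered_ab_group_add"
    and n m :: nat
    and X :: "('k list \<times> 'k list) set"
    and a :: "'k list"
    and L1 L2 :: "'k list set"
  assumes "valuation v"
    and "alg_closed_field TYPE('k)"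
    and "X \<subseteq> tuples n \<times> tuples m"
    and "a \<in> tuples n"
    and "is_min_limit_set v m X a L1"
    and "is_min_limit_set v m X a L2"
  shows "vclosure v m L1 = vclosure v m L2"
proof -
  have limit: "is_limit_set v m X a L1" "is_limit_set v m X a L2"
    using assms(5,6) unfolding is_min_limit_set_def by blast+
  have "L1 \<subseteq> vclosure v m L2" "L2 \<subseteq> vclosure v m L1"
    using min_limit_set_subset_vclosure[OF assms(1)] assms(5,6) limit by blast+
  then show ?thesis
    using vclosure_subset_vclosure[OF assms(1)] by blast
qed

end
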